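(* Let $\phi_0:\mathcal{F}_{\eta_1,\lambda}\to\mathcal{F}_{\eta_2,\lambda}$ be a Virasoro-module homomorphism, i.e. $[L_m,\phi_0]=0$ for all $m\in\mathbb{Z}$, where $\eta_1\neq\eta_2$. Put $k_\phi=\eta_2-\eta_1$ and $$\phi_n=\frac{1}{k_\phi}[\alpha_n,\phi_0]\qquad(n\in\mathbb{Z}).$$ Then: 1. The $n=0$ case recovers the original map: $\frac{1}{k_\phi}[\alpha_0,\phi_0]=\phi_0$. 2. For all $m,n\in\mathbb{Z}$, $[L_m,\phi_n]=-n\,\phi_{m+n}$. 3. Consequently, for all $m,n\in\mathbb{Z}$, $$[L_m,\phi_n]-[L_n,\phi_m]=(m-n)\,\phi_{m+n}.$$ 4. The operators $L_n\mapsto\begin{pmatrix}L_n&\phi_n\\0&L_n\end{pmatrix}$ define a representation of the Virasoro algebra, of central charge $1-12\lambda^2$, on $\mathcal{F}_{\eta_2,\lambda}\oplus\mathcal{F}_{\eta_1,\lambda}$.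
   Context: The Heisenberg algebra has modes $\alpha_n$ ($n\in\mathbb{Z}$) with $[\alpha_m,\alpha_n]=m\delta_{m,-n}$. $\mathcal{F}_\eta$ is the Fock space generated by a vacuum $|\eta\rangle$ with $\alpha_n|\eta\rangle=0$ for $n>0$ and $\alpha_0|\eta\rangle=\eta|\eta\rangle$; $\alpha_0$ acts on all of $\mathcal{F}_\eta$ as the scalar $\eta$. $\mathcal{F}_{\eta,\lambda}$ denotes $\mathcal{F}_\eta$ with the Virasoro action $$L_n=\tfrac12\sum_k:\alpha_k\alpha_{n-k}:-\lambda(n+1)\alpha_n,$$ where normal ordering places positive-index modes to the right. In $[\alpha_n,\phi_0]=\alpha_n\phi_0-\phi_0\alpha_n$, the mode $\alpha_n$ acts on the target space in the first term and on the source space in the second. The matrix in part 4 means $L_n(u,w)=(L_nu+\phi_nw,\,L_nw)$. *)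

theory Defs
  imports Complex_Main "HOL-Library.Multiset" "HOL-Library.Groups_Big_Fun"
begin

text \<open>Concrete model of the Fock space: a vector is a finitely supported family of
coefficients indexed by multisets of positive integers; the multiset M stands for
the basis vector (product over n in M of alpha_{-n}) applied to the vacuum.\<close>

type_synonym fvec = "nat multiset \<Rightarrow> complex"

definition fock_space :: "fvec set" where
  "fock_space = {v. finite {M. v M \<noteq> 0} \<and> (\<forall>M. v M \<noteq> 0 \<longrightarrow> 0 \<notin># M)}"

definition vadd :: "fvec \<Rightarrow> fvec \<Rightarrow> fvec" where
  "vadd u v = (\<lambda>M. u M + v M)"

definition vsub :: "fvec \<Rightarrow> fvec \<Rightarrow> fvec" where
  "vsub u v = (\<lambda>M. u M - v M)"

definition vscale :: "complex \<Rightarrow> fvec \<Rightarrow> fvec" where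
  "vscale c v = (\<lambda>M. c * v M)"

text \<open>Heisenberg mode alpha_n on F_eta: alpha_{-n} (n>0) is creation, alpha_n (n>0)
acts as n d/dx_n, alpha_0 acts as the scalar eta.\<close>
definition heis :: "complex \<Rightarrow> int \<Rightarrow> fvec \<Rightarrow> fvec" where
  "heis eta n v = (\<lambda>M.
     if n = 0 then eta * v M
     else if n < 0 then (if nat (- n) \<in># M then v (M - {#nat (- n)#}) else 0)
     else of_int n * of_nat (count M (nat n) + 1) * v (M + {#nat n#}))"

definition nord :: "complex \<Rightarrow> int \<Rightarrow> int \<Rightarrow> fvec \<Rightarrow> fvec" where
  "nord eta a b v = (if a \<le> b then heis eta a (heis eta b v) else heis eta b (heis eta a v))"

definition vir :: "complex \<Rightarrow> complex \<Rightarrow> int \<Rightarrow> fvec \<Rightarrow> fvec" where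
  "vir eta lam n v = (\<lambda>M. (1/2) * Sum_any (\<lambda>k. nord eta k (n - k) v M)
                         - lam * of_int (n + 1) * heis eta n v M)"

definition vcomm :: "complex \<Rightarrow> complex \<Rightarrow> complex \<Rightarrow> int \<Rightarrow> (fvec \<Rightarrow> fvec) \<Rightarrow> fvec \<Rightarrow> fvec" where
  "vcomm eta1 eta2 lam m psi v = vsub (vir eta2 lam m (psi v)) (psi (vir eta1 lam m v))"

definition phi_mode :: "complex \<Rightarrow> complex \<Rightarrow> (fvec \<Rightarrow> fvec) \<Rightarrow> int \<Rightarrow> fvec \<Rightarrow> fvec" where
  "phi_mode eta1 eta2 phi0 n v =
     vscale (1 / (eta2 - eta1)) (vsub (heis eta2 n (phi0 v)) (phi0 (heis eta1 n v)))"

definition ext_op :: "complex \<Rightarrow> complex \<Rightarrow> complex \<Rightarrow> (fvec \<Rightarrow> fvec) \<Rightarrow> int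
                       \<Rightarrow> fvec \<times> fvec \<Rightarrow> fvec \<times> fvec" where
  "ext_op eta1 eta2 lam phi0 n x =
     (vadd (vir eta2 lam n (fst x)) (phi_mode eta1 eta2 phi0 n (snd x)), vir eta1 lam n (snd x))"

definition padd :: "fvec \<times> fvec \<Rightarrow> fvec \<times> fvec \<Rightarrow> fvec \<times> fvec" where
  "padd x y = (vadd (fst x) (fst y), vadd (snd x) (snd y))"

definition psub :: "fvec \<times> fvec \<Rightarrow> fvec \<times> fvec \<Rightarrow> fvec \<times> fvec" where
  "psub x y = (vsub (fst x) (fst y), vsub (snd x) (snd y))"

definition pscale :: "complex \<Rightarrow> fvec \<times> fvec \<Rightarrow> fvec \<times> fvec" where
  "pscale c x = (vscale c (fst x), vscale c (snd x))"

end

theory Submission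
  imports Defs
begin

text \<open>
  In coordinates, \<open>\<alpha>_{-j}\<close> adds a part \<open>j\<close> to the multiset, \<open>\<alpha>_j\<close> removes one (with multiplicity
  factor \<open>j\<close>) and \<open>\<alpha>_0\<close> multiplies by \<open>\<eta>\<close>, so \<open>[\<alpha>_a, \<alpha>_b] = a \<delta>_{a+b,0}\<close>. This gives
  \<open>[L_p, \<alpha>_q] = -q \<alpha>_{p+q} - \<lambda>p(p+1) \<delta>_{p+q,0}\<close> on every \<open>F_{\<eta>,\<lambda>}\<close>. As \<open>\<phi>_0\<close> intertwines the
  \<open>L_m\<close> and the scalar term does not depend on \<open>\<eta>\<close>, the modes \<open>\<phi>_n = [\<alpha>_n, \<phi>_0]/k_\<phi>\<close> satisfy
  \<open>[L_m, \<phi>_n] = -n \<phi>_{m+n}\<close>, and \<open>\<phi>_0\<close> is recovered because \<open>\<alpha>_0\<close> acts by \<open>\<eta>_2\<close> and \<open>\<eta>_1\<close>.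

  The extension is then a representation as soon as each \<open>F_{\<eta>,\<lambda>}\<close> satisfies the Virasoro relations
  with \<open>c = 1 - 12\<lambda>\<^sup>2\<close>. The defect \<open>[L_m, L_n] - (m-n) L_{m+n}\<close> commutes with every \<open>\<alpha>_k\<close> (its
  scalar terms cancel by a cocycle identity); since the Fock space is generated from the vacuum by
  the \<open>\<alpha>_{-j}\<close>, the defect is a scalar. By the grading it vanishes unless \<open>m + n = 0\<close>, and for
  \<open>n = -m\<close> it is evaluated on the vacuum.
\<close>

section \<open>The Heisenberg modes in coordinates\<close>

definition heis_shift :: "int \<Rightarrow> nat multiset \<Rightarrow> nat multiset" where
  "heis_shift n M = (if n = 0 then M else if n < 0 then M - {#nat (- n)#} else M + {#nat n#})"

definition heis_coeff :: "complex \<Rightarrow> int \<Rightarrow> nat multiset \<Rightarrow> complex" where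
  "heis_coeff eta n M =
     (if n = 0 then eta
      else if n < 0 then (if nat (- n) \<in># M then 1 else 0)
      else of_int n * of_nat (count M (nat n) + 1))"

lemma heis_apply: "heis eta n v M = heis_coeff eta n M * v (heis_shift n M)"
  by (simp add: heis_def heis_coeff_def heis_shift_def)

lemma heis_zero_mode: "heis eta 0 v = (\<lambda>M. eta * v M)"
  by (simp add: fun_eq_iff heis_apply heis_coeff_def heis_shift_def)

lemma heis_add: "heis eta n (\<lambda>M. u M + v M) = (\<lambda>M. heis eta n u M + heis eta n v M)"
  by (simp add: heis_apply fun_eq_iff algebra_simps)

lemma heis_diff: "heis eta n (\<lambda>M. u M - v M) = (\<lambda>M. heis eta n u M - heis eta n v M)"
  by (simp add: heis_apply fun_eq_iff algebra_simps)

lemma heis_scale: "heis eta n (\<lambda>M. c * v M) = (\<lambda>M. c * heis eta n v M)"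
  by (simp add: heis_apply fun_eq_iff algebra_simps)

lemma heis_zero: "heis eta n (\<lambda>M. 0) = (\<lambda>M. 0)"
  by (simp add: heis_apply fun_eq_iff)

lemma heis_commute:
  "heis eta a (heis eta b v) M
     = heis eta b (heis eta a v) M + (if a + b = 0 then of_int a * v M else 0)"
proof -
  consider "a = 0" | "b = 0" | "a < 0" "b < 0" | "a > 0" "b > 0"
    | j k where "a = - int j" "b = int k" "j > 0" "k > 0"
    | j k where "b = - int j" "a = int k" "j > 0" "k > 0"
  proof -
    have "\<exists>j. x = - int j \<and> j > 0" if "x < 0" for x :: int
      using that by (intro exI[of _ "nat (- x)"]) auto
    moreover have "\<exists>k. x = int k \<and> k > 0" if "x > 0" for x :: int
      using that by (intro exI[of _ "nat x"]) auto
    ultimately show thesis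
      using that by (metis linorder_neqE_linordered_idom)
  qed
  then show ?thesis
  proof cases
    case 3
    then show ?thesis
      by (auto simp: heis_apply heis_coeff_def heis_shift_def diff_right_commute in_diff_count
          add_mset_commute)
  next
    case (5 j k)
    then show ?thesis
      by (cases "j = k") (auto simp: heis_apply heis_coeff_def heis_shift_def algebra_simps
          not_in_iff in_diff_count diff_union_swap2 count_diff)
  next
    case (6 j k)
    then show ?thesis
      by (cases "j = k") (auto simp: heis_apply heis_coeff_def heis_shift_def algebra_simps
          not_in_iff in_diff_count diff_union_swap2 count_diff)
  qed (auto simp: heis_apply heis_coeff_def heis_shift_def algebra_simps)
qed


section \<open>Normal ordering and the Virasoro modes\<close>

declare of_nat_sum_mset [simp del] \<comment> \<open>keeps \<open>int (sum_mset M)\<close> atomic for linear arithmetic\<close>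

lemma member_le_sum_mset: "x \<in># M \<Longrightarrow> x \<le> sum_mset (M :: nat multiset)"
  using sum_mset.remove by fastforce

lemma nord_eq_heis:
  "nord eta a b v
     = (\<lambda>M. heis eta a (heis eta b v) M - (if b < a \<and> a + b = 0 then of_int a else 0) * v M)"
proof (cases "a \<le> b")
  case False
  have "of_int b = - (of_int a :: complex)" if "b + a = 0"
  proof -
    from that have "b = - a" by simp
    then show ?thesis by simp
  qed
  then show ?thesis
    using False by (auto simp: fun_eq_iff nord_def heis_commute[of eta b a] add.commute)
qed (simp add: nord_def)

lemma nord_add: "nord eta a b (\<lambda>M. u M + v M) = (\<lambda>M. nord eta a b u M + nord eta a b v M)"
  by (simp add: nord_def heis_add)

lemma nord_diff: "nord eta a b (\<lambda>M. u M - v M) = (\<lambda>M. nord eta a b u M - nord eta a b v M)"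
  by (simp add: nord_def heis_diff)

lemma nord_scale: "nord eta a b (\<lambda>M. c * v M) = (\<lambda>M. c * nord eta a b v M)"
  by (simp add: nord_def heis_scale)

lemma nord_zero: "nord eta a b (\<lambda>M. 0) = (\<lambda>M. 0)"
  by (simp add: nord_def heis_zero)

text \<open>The annihilating one of the two modes must remove a part of \<open>M\<close>, so at a given coordinate only
  finitely many terms of the normal-ordered sum defining \<open>L_n\<close> are nonzero.\<close>

lemma nord_nonzero_bound:
  assumes "nord eta k (n - k) v M \<noteq> 0"
  shows "\<bar>k\<bar> \<le> int (sum_mset M) + \<bar>n\<bar>"
proof -
  define a where "a = min k (n - k)"
  have "heis_coeff eta a M \<noteq> 0"
    using assms unfolding a_def nord_def by (auto simp: heis_apply min_def split: if_splits)
  then have "a < 0 \<Longrightarrow> - a \<le> int (sum_mset M)"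
    by (auto simp: heis_coeff_def nat_le_iff[symmetric] intro: member_le_sum_mset split: if_splits)
  then show ?thesis
    unfolding a_def min_def using of_nat_0_le_iff[of "sum_mset M", where 'a = int] by arith
qed

lemma vir_eq_finite_sum:
  assumes "int (sum_mset M) + \<bar>n\<bar> \<le> B"
  shows "vir eta lam n v M
           = (1/2) * (\<Sum>k\<in>{-B..B}. nord eta k (n - k) v M) - lam * of_int (n + 1) * heis eta n v M"
proof -
  have "Sum_any (\<lambda>k. nord eta k (n - k) v M) = (\<Sum>k\<in>{-B..B}. nord eta k (n - k) v M)"
    using nord_nonzero_bound[of eta _ n v M] assms by (intro Sum_any.expand_superset) fastforce+
  then show ?thesis
    by (simp add: vir_def)
qed

lemma vir_add: "vir eta lam n (\<lambda>M. u M + v M) = (\<lambda>M. vir eta lam n u M + vir eta lam n v M)"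
  by (simp add: fun_eq_iff vir_eq_finite_sum[OF order_refl] nord_add heis_add sum.distrib
      algebra_simps)

lemma vir_diff: "vir eta lam n (\<lambda>M. u M - v M) = (\<lambda>M. vir eta lam n u M - vir eta lam n v M)"
  by (simp add: fun_eq_iff vir_eq_finite_sum[OF order_refl] nord_diff heis_diff sum_subtractf
      algebra_simps)

lemma vir_scale: "vir eta lam n (\<lambda>M. c * v M) = (\<lambda>M. c * vir eta lam n v M)"
  by (simp add: fun_eq_iff vir_eq_finite_sum[OF order_refl] nord_scale heis_scale
      sum_distrib_left algebra_simps)

lemma vir_zero: "vir eta lam n (\<lambda>M. 0) = (\<lambda>M. 0)"
  by (simp add: vir_def nord_zero heis_zero fun_eq_iff)

lemma vir_sum:
  "finite I \<Longrightarrow> vir eta lam n (\<lambda>M. \<Sum>i\<in>I. v i M) = (\<lambda>M. \<Sum>i\<in>I. vir eta lam n (v i) M)"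
  by (induction I rule: finite_induct) (simp_all add: vir_zero vir_add)


section \<open>The commutator of \<open>L_p\<close> with \<open>\<alpha>_q\<close>\<close>

lemma nord_heis_commute:
  "nord eta k (p - k) (heis eta q v) M - heis eta q (nord eta k (p - k) v) M
     = (if k = - q then of_int k * heis eta (p - k) v M else 0)
     + (if k = p + q then of_int (p - k) * heis eta k v M else 0)"
proof -
  define s where "s = (if p - k < k \<and> k + (p - k) = 0 then of_int k else (0 :: complex))"
  have nord_heis: "nord eta k (p - k) (heis eta q v) M
      = heis eta k (heis eta (p - k) (heis eta q v)) M - s * heis eta q v M"
    by (simp add: nord_eq_heis[of eta k "p - k", folded s_def])
  have heis_nord: "heis eta q (nord eta k (p - k) v) M
      = heis eta q (heis eta k (heis eta (p - k) v)) M - s * heis eta q v M"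
    by (simp add: nord_eq_heis[of eta k "p - k", folded s_def] heis_diff heis_scale)
  have "heis eta (p - k) (heis eta q v)
      = (\<lambda>M. heis eta q (heis eta (p - k) v) M + (if p - k + q = 0 then of_int (p - k) * v M else 0))"
    by (simp add: fun_eq_iff heis_commute[of eta "p - k" q])
  then have "heis eta k (heis eta (p - k) (heis eta q v)) M
      = heis eta k (heis eta q (heis eta (p - k) v)) M
        + (if p - k + q = 0 then of_int (p - k) * heis eta k v M else 0)"
    by (simp add: heis_add heis_scale heis_zero)
  also have "\<dots> = heis eta q (heis eta k (heis eta (p - k) v)) M
        + (if k + q = 0 then of_int k * heis eta (p - k) v M else 0)
        + (if p - k + q = 0 then of_int (p - k) * heis eta k v M else 0)"
    by (simp add: heis_commute[of eta k q])
  finally show ?thesis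
    unfolding nord_heis heis_nord by (auto simp: eq_neg_iff_add_eq_0)
qed

text \<open>The term \<open>-\<lambda>(p+1)\<alpha>_p\<close> of \<open>L_p\<close> contributes \<open>-\<lambda>(p+1)[\<alpha>_p, \<alpha>_q] = -\<lambda>(p+1)p \<delta>_{p+q,0}\<close>.\<close>

definition vir_heis_anomaly :: "complex \<Rightarrow> int \<Rightarrow> int \<Rightarrow> complex" where
  "vir_heis_anomaly lam p q = (if p + q = 0 then lam * of_int (p + 1) * of_int p else 0)"

lemma sum_mset_heis_shift_le: "int (sum_mset (heis_shift q M)) \<le> int (sum_mset M) + \<bar>q\<bar>"
proof -
  have remove_le: "int (sum_mset (M - {#x#})) \<le> int (sum_mset M)" for x
    by (cases "x \<in># M") (auto simp: sum_mset.remove[of x M])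
  show ?thesis
    using remove_le[of "nat (- q)"] by (auto simp: heis_shift_def)
qed

lemma vir_heis_commute:
  "vir eta lam p (heis eta q v) M
     = heis eta q (vir eta lam p v) M - of_int q * heis eta (p + q) v M - vir_heis_anomaly lam p q * v M"
proof -
  define B where "B = int (sum_mset M) + \<bar>p\<bar> + \<bar>q\<bar>"
  have lhs: "vir eta lam p (heis eta q v) M
      = (1/2) * (\<Sum>k\<in>{-B..B}. nord eta k (p - k) (heis eta q v) M)
        - lam * of_int (p + 1) * heis eta p (heis eta q v) M"
    by (rule vir_eq_finite_sum) (simp add: B_def)
  have "heis eta q (vir eta lam p v) M = heis_coeff eta q M * vir eta lam p v (heis_shift q M)"
    by (rule heis_apply)
  also have "\<dots> = heis_coeff eta q M * ((1/2) * (\<Sum>k\<in>{-B..B}. nord eta k (p - k) v (heis_shift q M))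
        - lam * of_int (p + 1) * heis eta p v (heis_shift q M))"
    using sum_mset_heis_shift_le[of q M] by (subst vir_eq_finite_sum[where B = B]) (simp_all add: B_def)
  also have "\<dots> = (1/2) * (\<Sum>k\<in>{-B..B}. heis_coeff eta q M * nord eta k (p - k) v (heis_shift q M))
        - lam * of_int (p + 1) * (heis_coeff eta q M * heis eta p v (heis_shift q M))"
    by (simp add: sum_distrib_left algebra_simps)
  finally have rhs: "heis eta q (vir eta lam p v) M
      = (1/2) * (\<Sum>k\<in>{-B..B}. heis eta q (nord eta k (p - k) v) M)
        - lam * of_int (p + 1) * heis eta q (heis eta p v) M"
    by (simp only: heis_apply[symmetric])
  have "- q \<in> {-B..B}" "p + q \<in> {-B..B}"
    by (auto simp: B_def)
  have sums: "(\<Sum>k\<in>{-B..B}. nord eta k (p - k) (heis eta q v) M)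
      = (\<Sum>k\<in>{-B..B}. heis eta q (nord eta k (p - k) v) M) - 2 * of_int q * heis eta (p + q) v M"
  proof -
    have "(\<Sum>k\<in>{-B..B}. nord eta k (p - k) (heis eta q v) M)
        - (\<Sum>k\<in>{-B..B}. heis eta q (nord eta k (p - k) v) M) = - 2 * of_int q * heis eta (p + q) v M"
      using \<open>- q \<in> {-B..B}\<close> \<open>p + q \<in> {-B..B}\<close>
      by (simp add: sum_subtractf[symmetric] nord_heis_commute sum.distrib)
    then show ?thesis
      by (simp add: algebra_simps)
  qed
  show ?thesis
    unfolding lhs rhs sums heis_commute[of eta p q v M] vir_heis_anomaly_def
    by (simp add: algebra_simps)
qed


section \<open>The Virasoro relations on the Fock space\<close>

definition vir_defect :: "complex \<Rightarrow> complex \<Rightarrow> int \<Rightarrow> int \<Rightarrow> fvec \<Rightarrow> fvec" where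
  "vir_defect eta lam m n v =
     (\<lambda>M. vir eta lam m (vir eta lam n v) M - vir eta lam n (vir eta lam m v) M
          - of_int (m - n) * vir eta lam (m + n) v M)"

lemma vir_defect_antisym: "vir_defect eta lam m n v M = - vir_defect eta lam n m v M"
  by (simp add: vir_defect_def add.commute algebra_simps)

lemma vir_defect_sum:
  "finite I \<Longrightarrow> vir_defect eta lam m n (\<lambda>M. \<Sum>i\<in>I. c i * v i M) M'
     = (\<Sum>i\<in>I. c i * vir_defect eta lam m n (v i) M')"
  by (simp add: vir_defect_def vir_sum vir_scale sum_subtractf sum_distrib_left
      right_diff_distrib mult.left_commute)

lemma vir_defect_zero: "vir_defect eta lam m n (\<lambda>M. 0) = (\<lambda>M. 0)"
  by (simp add: vir_defect_def vir_zero)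

lemma vir_heis_anomaly_cocycle:
  "of_int k * (vir_heis_anomaly lam m (n + k) - vir_heis_anomaly lam n (m + k))
     + of_int (m - n) * vir_heis_anomaly lam (m + n) k = 0"
proof (cases "m + n + k = 0")
  case True
  then have k: "k = - m - n" by simp
  show ?thesis
    unfolding vir_heis_anomaly_def k by (simp add: algebra_simps)
qed (simp add: vir_heis_anomaly_def algebra_simps)

text \<open>Commuting \<open>\<alpha>_k\<close> through the defect produces \<open>\<alpha>_{m+n+k}\<close>-terms that cancel as in the Witt
  algebra, and scalar terms that cancel by the cocycle identity.\<close>

lemma vir_defect_heis_commute:
  "vir_defect eta lam m n (heis eta k v) M = heis eta k (vir_defect eta lam m n v) M"
proof -
  have vir_heis_commute': "vir eta lam p (heis eta q w)
      = (\<lambda>M. heis eta q (vir eta lam p w) M - of_int q * heis eta (p + q) w M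
             - vir_heis_anomaly lam p q * w M)" for p q w
    by (simp add: fun_eq_iff vir_heis_commute)
  have "n + (m + k) = m + n + k" "m + (n + k) = m + n + k"
    by simp_all
  moreover have "of_int k * (v M * vir_heis_anomaly lam m (k + n)) + of_int m * (v M * vir_heis_anomaly lam (m + n) k)
      = of_int k * (v M * vir_heis_anomaly lam n (k + m)) + of_int n * (v M * vir_heis_anomaly lam (m + n) k)"
    using arg_cong[OF vir_heis_anomaly_cocycle[of k lam m n], of "\<lambda>x. v M * x"]
    by (simp add: algebra_simps)
  ultimately show ?thesis
    by (simp add: vir_defect_def vir_heis_commute' vir_diff vir_scale heis_diff heis_scale)
      (simp add: algebra_simps)
qed


definition fock_basis :: "nat multiset \<Rightarrow> fvec" where
  "fock_basis N = (\<lambda>M. if M = N then 1 else 0)"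

lemma heis_create_fock_basis: "j > 0 \<Longrightarrow> heis eta (- int j) (fock_basis N) = fock_basis (add_mset j N)"
  by (auto simp: fun_eq_iff heis_apply heis_coeff_def heis_shift_def fock_basis_def)

lemma heis_annihilate_vacuum: "j > 0 \<Longrightarrow> heis eta j (fock_basis {#}) = (\<lambda>M. 0)"
  by (auto simp: fun_eq_iff heis_apply heis_coeff_def heis_shift_def fock_basis_def)

definition zero_part_free :: "fvec \<Rightarrow> bool" where
  "zero_part_free v \<longleftrightarrow> (\<forall>M. 0 \<in># M \<longrightarrow> v M = 0)"

lemma heis_zero_part_free: "zero_part_free v \<Longrightarrow> zero_part_free (heis eta n v)"
  by (auto simp: zero_part_free_def heis_apply heis_shift_def in_diff_count)

lemma nord_zero_part_free: "zero_part_free v \<Longrightarrow> zero_part_free (nord eta a b v)"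
  by (simp add: nord_def heis_zero_part_free)

lemma vir_zero_part_free:
  assumes "zero_part_free v"
  shows "zero_part_free (vir eta lam n v)"
  using nord_zero_part_free[OF assms] heis_zero_part_free[OF assms]
  by (simp add: zero_part_free_def vir_def)

lemma vir_defect_zero_part_free: "zero_part_free v \<Longrightarrow> zero_part_free (vir_defect eta lam m n v)"
  using vir_zero_part_free unfolding vir_defect_def zero_part_free_def by simp

lemma vir_defect_vacuum:
  "vir_defect eta lam m n (fock_basis {#})
     = (\<lambda>M. vir_defect eta lam m n (fock_basis {#}) {#} * fock_basis {#} M)"
proof
  fix M :: "nat multiset"
  consider "M = {#}" | "0 \<in># M" | j M' where "M = add_mset j M'" "j > 0"
  proof (cases M)
    case (add j M')
    then show thesis
      using that(2) that(3)[of j M'] by (cases "j = 0") auto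
  qed (use that in simp)
  then show "vir_defect eta lam m n (fock_basis {#}) M
      = vir_defect eta lam m n (fock_basis {#}) {#} * fock_basis {#} M"
  proof cases
    case 2
    have "zero_part_free (fock_basis {#})"
      by (simp add: zero_part_free_def fock_basis_def)
    then show ?thesis
      using 2 vir_defect_zero_part_free by (auto simp: zero_part_free_def fock_basis_def)
  next
    case (3 j M')
    have "heis eta (int j) (vir_defect eta lam m n (fock_basis {#})) M'
        = vir_defect eta lam m n (heis eta (int j) (fock_basis {#})) M'"
      by (simp add: vir_defect_heis_commute)
    also have "\<dots> = 0"
      using 3 by (simp add: heis_annihilate_vacuum vir_defect_zero)
    finally have "of_int (int j) * of_nat (count M' j + 1) * vir_defect eta lam m n (fock_basis {#}) M = 0"
      using 3 by (simp add: heis_apply heis_coeff_def heis_shift_def)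
    then show ?thesis
      using 3 of_nat_neq_0[of "count M' j", where 'a = complex] by (simp add: fock_basis_def)
  qed (simp add: fock_basis_def)
qed

lemma vir_defect_fock_basis:
  "0 \<notin># N \<Longrightarrow> vir_defect eta lam m n (fock_basis N)
     = (\<lambda>M. vir_defect eta lam m n (fock_basis {#}) {#} * fock_basis N M)"
proof (induction N)
  case empty
  show ?case
    by (rule vir_defect_vacuum)
next
  case (add j N)
  then have j: "j > 0" and "0 \<notin># N"
    by (auto simp: gr0I)
  let ?c = "vir_defect eta lam m n (fock_basis {#}) {#}"
  show ?case
  proof
    fix M
    have "vir_defect eta lam m n (fock_basis (add_mset j N)) M
        = vir_defect eta lam m n (heis eta (- int j) (fock_basis N)) M"
      using j by (simp add: heis_create_fock_basis)
    also have "\<dots> = heis eta (- int j) (vir_defect eta lam m n (fock_basis N)) M"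
      by (rule vir_defect_heis_commute)
    also have "\<dots> = ?c * heis eta (- int j) (fock_basis N) M"
      using add.IH[OF \<open>0 \<notin># N\<close>] by (simp add: heis_scale)
    also have "\<dots> = ?c * fock_basis (add_mset j N) M"
      using j by (simp add: heis_create_fock_basis)
    finally show "vir_defect eta lam m n (fock_basis (add_mset j N)) M = ?c * fock_basis (add_mset j N) M" .
  qed
qed

lemma fock_space_eq_sum_fock_basis:
  assumes "v \<in> fock_space"
  shows "v = (\<lambda>M. \<Sum>N\<in>{N. v N \<noteq> 0}. v N * fock_basis N M)"
proof
  fix M
  have "finite {N. v N \<noteq> 0}"
    using assms by (simp add: fock_space_def)
  have "(\<Sum>N\<in>{N. v N \<noteq> 0}. v N * fock_basis N M) = (\<Sum>N\<in>{N. v N \<noteq> 0}. if M = N then v N else 0)"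
    by (rule sum.cong) (auto simp: fock_basis_def)
  also have "\<dots> = v M"
    using \<open>finite {N. v N \<noteq> 0}\<close> by (simp add: sum.delta')
  finally show "v M = (\<Sum>N\<in>{N. v N \<noteq> 0}. v N * fock_basis N M)"
    by simp
qed

lemma vir_defect_scalar:
  assumes v: "v \<in> fock_space"
  shows "vir_defect eta lam m n v M = vir_defect eta lam m n (fock_basis {#}) {#} * v M"
proof -
  let ?S = "{N. v N \<noteq> 0}" and ?c = "vir_defect eta lam m n (fock_basis {#}) {#}"
  have "finite ?S" and S: "\<And>N. N \<in> ?S \<Longrightarrow> 0 \<notin># N"
    using v by (auto simp: fock_space_def)
  have "vir_defect eta lam m n v M = (\<Sum>N\<in>?S. v N * vir_defect eta lam m n (fock_basis N) M)"
    unfolding arg_cong[OF fock_space_eq_sum_fock_basis[OF v], of "\<lambda>v. vir_defect eta lam m n v M"]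
    by (rule vir_defect_sum[OF \<open>finite ?S\<close>])
  also have "\<dots> = (\<Sum>N\<in>?S. v N * (?c * fock_basis N M))"
    using fun_cong[OF vir_defect_fock_basis[OF S]] by (intro sum.cong) simp_all
  also have "\<dots> = ?c * (\<Sum>N\<in>?S. v N * fock_basis N M)"
    by (simp add: sum_distrib_left mult.left_commute)
  also have "\<dots> = ?c * v M"
    using fun_cong[OF fock_space_eq_sum_fock_basis[OF v], of M] by simp
  finally show ?thesis .
qed


definition of_level :: "int \<Rightarrow> fvec \<Rightarrow> bool" where
  "of_level d v \<longleftrightarrow> (\<forall>M. v M \<noteq> 0 \<longrightarrow> int (sum_mset M) = d)"

lemma of_level_vacuum: "of_level 0 (fock_basis {#})"
  by (simp add: of_level_def fock_basis_def)

lemma heis_of_level: "of_level d v \<Longrightarrow> of_level (d - n) (heis eta n v)"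
  unfolding of_level_def
proof (intro allI impI)
  fix M :: "nat multiset"
  assume v: "\<forall>M. v M \<noteq> 0 \<longrightarrow> int (sum_mset M) = d" and "heis eta n v M \<noteq> 0"
  then have coeff: "heis_coeff eta n M \<noteq> 0" and "v (heis_shift n M) \<noteq> 0"
    by (auto simp: heis_apply)
  have "int (sum_mset (heis_shift n M)) = int (sum_mset M) + n"
  proof (cases "n < 0")
    case True
    then have "nat (- n) \<in># M"
      using coeff by (auto simp: heis_coeff_def split: if_splits)
    then show ?thesis
      using True by (simp add: heis_shift_def sum_mset.remove[of "nat (- n)" M])
  qed (auto simp: heis_shift_def)
  then show "int (sum_mset M) = d - n"
    using v \<open>v (heis_shift n M) \<noteq> 0\<close> by force
qed

lemma nord_of_level:
  assumes "of_level d v"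
  shows "of_level (d - (a + b)) (nord eta a b v)"
proof -
  have "of_level (d - b - a) (heis eta a (heis eta b v))"
    "of_level (d - a - b) (heis eta b (heis eta a v))"
    by (intro heis_of_level assms)+
  then show ?thesis
    by (simp add: nord_def diff_diff_eq add.commute)
qed

lemma vir_of_level:
  assumes v: "of_level d v"
  shows "of_level (d - n) (vir eta lam n v)"
  unfolding of_level_def
proof (intro allI impI)
  fix M
  assume "vir eta lam n v M \<noteq> 0"
  then consider k where "nord eta k (n - k) v M \<noteq> 0" | "heis eta n v M \<noteq> 0"
    by (force simp: vir_def)
  then show "int (sum_mset M) = d - n"
    using nord_of_level[OF v] heis_of_level[OF v] by cases (auto simp: of_level_def)
qed

lemma of_level_neg: "of_level d v \<Longrightarrow> d < 0 \<Longrightarrow> v = (\<lambda>M. 0)"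
  by (auto simp: of_level_def fun_eq_iff)

lemma of_level_nonzero_at_empty: "of_level d v \<Longrightarrow> d \<noteq> 0 \<Longrightarrow> v {#} = 0"
  by (auto simp: of_level_def)

lemma vir_defect_vacuum_off_diagonal:
  "m + n \<noteq> 0 \<Longrightarrow> vir_defect eta lam m n (fock_basis {#}) {#} = 0"
  using of_level_nonzero_at_empty[OF vir_of_level[OF vir_of_level[OF of_level_vacuum]]]
    of_level_nonzero_at_empty[OF vir_of_level[OF of_level_vacuum]]
  by (simp add: vir_defect_def)


lemma vir_annihilate_vacuum: "m > 0 \<Longrightarrow> vir eta lam m (fock_basis {#}) = (\<lambda>M. 0)"
  using of_level_neg[OF vir_of_level[OF of_level_vacuum]] by simp

lemma vir_zero_mode_vacuum: "vir eta lam 0 (fock_basis {#}) {#} = eta * eta / 2 - lam * eta"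
  using vir_eq_finite_sum[of "{#}" 0 0] by (simp add: nord_def heis_zero_mode fock_basis_def)

lemma nord_annihilate_vacuum:
  "max k (n - k) > 0 \<Longrightarrow> nord eta k (n - k) (fock_basis {#}) = (\<lambda>M. 0)"
  using heis_annihilate_vacuum[of "max k (n - k)" eta]
  by (auto simp: nord_def max_def heis_zero split: if_splits)

lemma vir_create_vacuum:
  assumes m: "m > 0"
  shows "vir eta lam (- m) (fock_basis {#})
    = (\<lambda>M. (1/2) * (\<Sum>k\<in>{-m..0}. heis eta k (heis eta (- m - k) (fock_basis {#})) M)
           - lam * of_int (1 - m) * heis eta (- m) (fock_basis {#}) M)"
proof
  fix M
  define B where "B = int (sum_mset M) + m"
  have "(\<Sum>k\<in>{-B..B}. nord eta k (- m - k) (fock_basis {#}) M)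
      = (\<Sum>k\<in>{-m..0}. nord eta k (- m - k) (fock_basis {#}) M)"
    using m by (intro sum.mono_neutral_right) (auto simp: B_def nord_annihilate_vacuum)
  also have "\<dots> = (\<Sum>k\<in>{-m..0}. heis eta k (heis eta (- m - k) (fock_basis {#})) M)"
    using m by (intro sum.cong) (simp_all add: nord_eq_heis)
  finally show "vir eta lam (- m) (fock_basis {#}) M
      = (1/2) * (\<Sum>k\<in>{-m..0}. heis eta k (heis eta (- m - k) (fock_basis {#})) M)
        - lam * of_int (1 - m) * heis eta (- m) (fock_basis {#}) M"
    using m vir_eq_finite_sum[of M "- m" B] by (simp add: B_def)
qed

lemma vir_heis_create_at_vacuum:
  "p > 0 \<Longrightarrow> vir eta lam m (heis eta (- p) v) {#}
     = of_int p * heis eta (m - p) v {#} - vir_heis_anomaly lam m (- p) * v {#}"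
  by (simp add: vir_heis_commute heis_apply heis_coeff_def)

lemma vir_heis_vacuum:
  "m > 0 \<Longrightarrow> vir eta lam m (heis eta (- m) (fock_basis {#})) {#}
     = of_int m * eta - lam * of_int (m + 1) * of_int m"
  by (simp add: vir_heis_create_at_vacuum heis_zero_mode vir_heis_anomaly_def fock_basis_def)

lemma vir_heis_heis_vacuum:
  assumes m: "m > 0" and k: "k \<in> {-m..0}"
  shows "vir eta lam m (heis eta k (heis eta (- m - k) (fock_basis {#}))) {#}
     = of_int ((- k) * (m + k))
       + (if k = 0 \<or> k = - m then eta * (of_int m * eta - lam * of_int (m + 1) * of_int m) else 0)"
proof -
  consider "k = 0" | "k = - m" | "- m < k" "k < 0"
    using k by force
  then show ?thesis
  proof cases
    case 3
    define p q where "p = - k" and "q = m + k"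
    then have "p > 0" "q > 0" "m - p = q"
      and heis_heis: "heis eta k (heis eta (- m - k) (fock_basis {#}))
        = heis eta (- p) (heis eta (- q) (fock_basis {#}))"
      using 3 by auto
    then have "vir eta lam m (heis eta k (heis eta (- m - k) (fock_basis {#}))) {#}
        = of_int p * heis eta q (heis eta (- q) (fock_basis {#})) {#}
          - vir_heis_anomaly lam m (- p) * heis eta (- q) (fock_basis {#}) {#}"
      by (simp only: heis_heis vir_heis_create_at_vacuum)
    also have "\<dots> = of_int p * of_int q"
      using \<open>q > 0\<close> by (simp add: heis_apply heis_coeff_def heis_shift_def fock_basis_def)
    finally show ?thesis
      using 3 by (simp add: p_def q_def)
  qed (use m in \<open>simp_all add: heis_zero_mode heis_scale vir_scale vir_heis_vacuum\<close>)
qed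

lemma sum_neg_atLeast0: "2 * (\<Sum>k\<in>{- int N..0}. - k) = int N * (int N + 1)"
proof (induction N)
  case (Suc N)
  have "{- int (Suc N)..0} = insert (- int (Suc N)) {- int N..0}"
    by auto
  then show ?case
    using Suc.IH by (simp add: algebra_simps)
qed simp

lemma sum_neg_mult_atLeast0: "6 * (\<Sum>k\<in>{- int N..0}. (- k) * (int N + k)) = int N ^ 3 - int N"
proof (induction N)
  case (Suc N)
  have "{- int (Suc N)..0} = insert (- int (Suc N)) {- int N..0}"
    by auto
  then have "(\<Sum>k\<in>{- int (Suc N)..0}. (- k) * (int (Suc N) + k))
      = (\<Sum>k\<in>{- int N..0}. (- k) * (int N + k) + (- k))"
    by (simp add: algebra_simps)
  also have "\<dots> = (\<Sum>k\<in>{- int N..0}. (- k) * (int N + k)) + (\<Sum>k\<in>{- int N..0}. - k)"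
    by (rule sum.distrib)
  finally show ?case
    using Suc.IH sum_neg_atLeast0[of N] by (simp add: algebra_simps power3_eq_cube)
qed simp

text \<open>In \<open>L_{-m}|\<eta>\<rangle> = (1/2) \<Sum>_{k=-m..0} \<alpha>_k \<alpha>_{-m-k}|\<eta>\<rangle> - \<lambda>(1-m) \<alpha>_{-m}|\<eta>\<rangle>\<close> the two summands containing
  \<open>\<alpha>_0 = \<eta>\<close> are returned by \<open>L_m\<close> with a factor \<open>\<eta>\<close>; each other summand contributes \<open>(-k)(m+k)\<close>,
  and these add up to \<open>(m\<^sup>3 - m)/6\<close>.\<close>

lemma vir_vir_create_vacuum:
  assumes m: "m > 0"
  shows "vir eta lam m (vir eta lam (- m) (fock_basis {#})) {#}
    = (of_int m ^ 3 - of_int m) / 12 + eta * (of_int m * eta - lam * of_int (m + 1) * of_int m)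
      - lam * of_int (1 - m) * (of_int m * eta - lam * of_int (m + 1) * of_int m)"
proof -
  define E where "E = eta * (of_int m * eta - lam * of_int (m + 1) * of_int m)"
  have "(\<Sum>k\<in>{-m..0}. vir eta lam m (heis eta k (heis eta (- m - k) (fock_basis {#}))) {#})
      = (\<Sum>k\<in>{-m..0}. of_int ((- k) * (m + k)) + ((if k = 0 then E else 0) + (if k = - m then E else 0)))"
    using m by (intro sum.cong) (auto simp: vir_heis_heis_vacuum E_def)
  also have "\<dots> = of_int (\<Sum>k\<in>{-m..0}. (- k) * (m + k)) + 2 * E"
    using m by (simp only: sum.distrib of_int_sum) simp
  also have "\<dots> = (of_int m ^ 3 - of_int m) / 6 + 2 * E"
  proof -
    have "6 * (\<Sum>k\<in>{-m..0}. (- k) * (m + k)) = m ^ 3 - m"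
      using sum_neg_mult_atLeast0[of "nat m"] m by simp
    then have "6 * (of_int (\<Sum>k\<in>{-m..0}. (- k) * (m + k)) :: complex) = of_int m ^ 3 - of_int m"
      by (metis of_int_diff of_int_mult of_int_numeral of_int_power)
    then show ?thesis
      by (simp add: field_simps)
  qed
  finally have sum: "(\<Sum>k\<in>{-m..0}. vir eta lam m (heis eta k (heis eta (- m - k) (fock_basis {#}))) {#})
      = (of_int m ^ 3 - of_int m) / 6 + 2 * E" .
  have "vir eta lam m (vir eta lam (- m) (fock_basis {#})) {#}
      = (1/2) * (\<Sum>k\<in>{-m..0}. vir eta lam m (heis eta k (heis eta (- m - k) (fock_basis {#}))) {#})
        - lam * of_int (1 - m) * vir eta lam m (heis eta (- m) (fock_basis {#})) {#}"
    by (simp only: vir_create_vacuum[OF m] vir_diff vir_scale vir_sum[OF finite_atLeastAtMost_int])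
  then show ?thesis
    by (simp add: sum vir_heis_vacuum[OF m] E_def field_simps)
qed

lemma vir_defect_vacuum_diagonal:
  assumes "m > 0"
  shows "vir_defect eta lam m (- m) (fock_basis {#}) {#} = (1 - 12 * lam ^ 2) / 12 * (of_int m ^ 3 - of_int m)"
  using assms
  by (simp add: vir_defect_def vir_vir_create_vacuum vir_annihilate_vacuum vir_zero vir_zero_mode_vacuum
      field_simps power2_eq_square power3_eq_cube)

definition virasoro_central_term :: "complex \<Rightarrow> int \<Rightarrow> int \<Rightarrow> complex" where
  "virasoro_central_term c m n = (if m + n = 0 then c / 12 * (of_int m ^ 3 - of_int m) else 0)"

lemma vir_defect_vacuum_value:
  "vir_defect eta lam m n (fock_basis {#}) {#} = virasoro_central_term (1 - 12 * lam ^ 2) m n"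
proof (cases "m + n = 0")
  case True
  then have n: "n = - m"
    by simp
  consider "m > 0" | "m = 0" | "m < 0"
    by linarith
  then show ?thesis
  proof cases
    case 1
    then show ?thesis
      by (simp add: n vir_defect_vacuum_diagonal virasoro_central_term_def)
  next
    case 2
    then show ?thesis
      by (simp add: n vir_defect_def virasoro_central_term_def)
  next
    case 3
    have "vir_defect eta lam m n (fock_basis {#}) {#} = - vir_defect eta lam (- m) m (fock_basis {#}) {#}"
      unfolding n by (rule vir_defect_antisym)
    also have "\<dots> = - ((1 - 12 * lam ^ 2) / 12 * (of_int (- m) ^ 3 - of_int (- m)))"
      using 3 vir_defect_vacuum_diagonal[of "- m"] by simp
    finally show ?thesis
      using True by (simp add: virasoro_central_term_def power3_eq_cube field_simps)
  qed
qed (simp add: vir_defect_vacuum_off_diagonal virasoro_central_term_def)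

theorem vir_commute:
  assumes "v \<in> fock_space"
  shows "vir eta lam m (vir eta lam n v) M - vir eta lam n (vir eta lam m v) M
     = of_int (m - n) * vir eta lam (m + n) v M + virasoro_central_term (1 - 12 * lam ^ 2) m n * v M"
proof -
  have "vir_defect eta lam m n v M = virasoro_central_term (1 - 12 * lam ^ 2) m n * v M"
    using vir_defect_scalar[OF assms] by (simp only: vir_defect_vacuum_value)
  then show ?thesis
    by (simp add: vir_defect_def algebra_simps)
qed


section \<open>Closure of the Fock space\<close>

lemma finite_support_heis:
  assumes "finite {M. v M \<noteq> 0}"
  shows "finite {M. heis eta n v M \<noteq> 0}"
proof -
  define unshift where
    "unshift N = (if n = 0 then N else if n < 0 then add_mset (nat (- n)) N else N - {#nat n#})" for N
  have "{M. heis eta n v M \<noteq> 0} \<subseteq> unshift ` {M. v M \<noteq> 0}"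
  proof
    fix M
    assume "M \<in> {M. heis eta n v M \<noteq> 0}"
    then have coeff: "heis_coeff eta n M \<noteq> 0" and "v (heis_shift n M) \<noteq> 0"
      by (auto simp: heis_apply)
    moreover have "unshift (heis_shift n M) = M"
      using coeff by (auto simp: unshift_def heis_shift_def heis_coeff_def split: if_splits)
    ultimately show "M \<in> unshift ` {M. v M \<noteq> 0}"
      by force
  qed
  then show ?thesis
    using assms finite_surj by blast
qed

lemma finite_support_vir:
  assumes fin: "finite {M. v M \<noteq> 0}"
  shows "finite {M. vir eta lam n v M \<noteq> 0}"
proof -
  obtain T where T: "\<And>N. v N \<noteq> 0 \<Longrightarrow> sum_mset N \<le> T"
    using fin finite_nat_set_iff_bounded_le[of "sum_mset ` {M. v M \<noteq> 0}"] by auto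
  define B where "B = int T + \<bar>n\<bar>"
  have nord_bound: "\<bar>k\<bar> \<le> B" if "nord eta k (n - k) v M \<noteq> 0" for k M
  proof -
    define a b where "a = min k (n - k)" and "b = max k (n - k)"
    have "nord eta k (n - k) v M = heis eta a (heis eta b v) M"
      unfolding nord_def a_def b_def by (auto simp: min_def max_def)
    then have sum_le: "sum_mset (heis_shift b (heis_shift a M)) \<le> T"
      using that T by (auto simp: heis_apply)
    have "b \<le> int T"
    proof (cases "b > 0")
      case True
      then show ?thesis
        using sum_le member_le_sum_mset[of "nat b" "heis_shift b (heis_shift a M)"]
        by (auto simp: heis_shift_def)
    qed simp
    then have "k \<le> int T" "n - k \<le> int T"
      unfolding b_def by auto
    then show ?thesis
      unfolding B_def using abs_ge_self[of n] abs_ge_minus_self[of n] by (simp add: abs_le_iff)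
  qed
  have "{M. vir eta lam n v M \<noteq> 0}
      \<subseteq> (\<Union>k\<in>{-B..B}. {M. nord eta k (n - k) v M \<noteq> 0}) \<union> {M. heis eta n v M \<noteq> 0}"
  proof
    fix M
    assume "M \<in> {M. vir eta lam n v M \<noteq> 0}"
    then have "(\<exists>k. nord eta k (n - k) v M \<noteq> 0) \<or> heis eta n v M \<noteq> 0"
      by (auto simp: vir_def)
    then show "M \<in> (\<Union>k\<in>{-B..B}. {M. nord eta k (n - k) v M \<noteq> 0}) \<union> {M. heis eta n v M \<noteq> 0}"
      using nord_bound by fastforce
  qed
  moreover have "finite {M. nord eta k (n - k) v M \<noteq> 0}" for k
    using fin by (simp add: nord_def finite_support_heis)
  ultimately show ?thesis
    using fin by (auto intro: finite_subset finite_support_heis)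
qed

lemma fock_space_iff: "v \<in> fock_space \<longleftrightarrow> finite {M. v M \<noteq> 0} \<and> zero_part_free v"
  by (auto simp: fock_space_def zero_part_free_def)

lemma heis_fock_space: "v \<in> fock_space \<Longrightarrow> heis eta n v \<in> fock_space"
  by (simp add: fock_space_iff finite_support_heis heis_zero_part_free)

lemma vir_fock_space: "v \<in> fock_space \<Longrightarrow> vir eta lam n v \<in> fock_space"
  by (simp add: fock_space_iff finite_support_vir vir_zero_part_free)

lemma vadd_fock_space: "u \<in> fock_space \<Longrightarrow> v \<in> fock_space \<Longrightarrow> vadd u v \<in> fock_space"
  unfolding fock_space_iff zero_part_free_def vadd_def
  by (auto intro: finite_subset[of _ "{M. u M \<noteq> 0} \<union> {M. v M \<noteq> 0}"])

lemma vsub_fock_space: "u \<in> fock_space \<Longrightarrow> v \<in> fock_space \<Longrightarrow> vsub u v \<in> fock_space"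
  unfolding fock_space_iff zero_part_free_def vsub_def
  by (auto intro: finite_subset[of _ "{M. u M \<noteq> 0} \<union> {M. v M \<noteq> 0}"])

lemma vscale_fock_space: "v \<in> fock_space \<Longrightarrow> vscale c v \<in> fock_space"
  unfolding fock_space_iff zero_part_free_def vscale_def
  by (auto intro: finite_subset[of _ "{M. v M \<noteq> 0}"])


section \<open>The modes of an intertwiner\<close>

locale fock_intertwiner =
  fixes eta1 eta2 lam :: complex and phi0 :: "fvec \<Rightarrow> fvec"
  assumes neq: "eta1 \<noteq> eta2"
    and closed: "v \<in> fock_space \<Longrightarrow> phi0 v \<in> fock_space"
    and additive: "u \<in> fock_space \<Longrightarrow> v \<in> fock_space \<Longrightarrow> phi0 (vadd u v) = vadd (phi0 u) (phi0 v)"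
    and homog: "v \<in> fock_space \<Longrightarrow> phi0 (vscale c v) = vscale c (phi0 v)"
    and intertwines: "v \<in> fock_space \<Longrightarrow> vir eta2 lam m (phi0 v) = phi0 (vir eta1 lam m v)"
begin

lemma phi0_add:
  "u \<in> fock_space \<Longrightarrow> v \<in> fock_space \<Longrightarrow> phi0 (\<lambda>M. u M + v M) = (\<lambda>M. phi0 u M + phi0 v M)"
  using additive[of u v] by (simp add: vadd_def)

lemma phi0_linear_combination:
  assumes "u \<in> fock_space" "v \<in> fock_space"
  shows "phi0 (\<lambda>M. a * u M + b * v M) = (\<lambda>M. a * phi0 u M + b * phi0 v M)"
proof -
  have "(\<lambda>M. a * u M + b * v M) = vadd (vscale a u) (vscale b v)"
    by (simp add: vadd_def vscale_def)
  then show ?thesis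
    using assms by (simp add: additive homog vscale_fock_space) (simp add: vadd_def vscale_def)
qed

lemma phi_mode_zero: "v \<in> fock_space \<Longrightarrow> phi_mode eta1 eta2 phi0 0 v = phi0 v"
  using neq homog[of v eta1]
  by (simp add: phi_mode_def vsub_def vscale_def heis_zero_mode fun_eq_iff field_simps)

text \<open>Since \<open>\<phi>_0\<close> intertwines the \<open>L_m\<close>, \<open>[L_m, [\<alpha>_n, \<phi>_0]] = [[L_m, \<alpha>_n], \<phi>_0]\<close>; the scalar
  anomaly of \<open>[L_m, \<alpha>_n]\<close> is the same on both Fock spaces and drops out.\<close>

lemma vcomm_phi_mode_apply:
  assumes v: "v \<in> fock_space"
  shows "vcomm eta1 eta2 lam m (phi_mode eta1 eta2 phi0 n) v M
       = - of_int n * phi_mode eta1 eta2 phi0 (m + n) v M"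
proof -
  let ?A = "vir_heis_anomaly lam m n"
  have target: "vir eta2 lam m (heis eta2 n (phi0 v)) M
      = heis eta2 n (phi0 (vir eta1 lam m v)) M - of_int n * heis eta2 (m + n) (phi0 v) M - ?A * phi0 v M"
    using v by (simp add: vir_heis_commute intertwines)
  define w where "w = (\<lambda>M. of_int n * heis eta1 (m + n) v M + ?A * v M)"
  have w: "w \<in> fock_space"
    using vadd_fock_space[OF vscale_fock_space vscale_fock_space, OF heis_fock_space[OF v] v]
    by (simp add: w_def vadd_def vscale_def)
  have "heis eta1 n (vir eta1 lam m v) = (\<lambda>M. vir eta1 lam m (heis eta1 n v) M + w M)"
    by (simp add: fun_eq_iff vir_heis_commute w_def)
  then have source: "phi0 (heis eta1 n (vir eta1 lam m v)) M
      = phi0 (vir eta1 lam m (heis eta1 n v)) M + of_int n * phi0 (heis eta1 (m + n) v) M + ?A * phi0 v M"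
    using phi0_add[OF vir_fock_space[OF heis_fock_space[OF v]] w]
      phi0_linear_combination[OF heis_fock_space[OF v] v, where a = "of_int n" and b = ?A]
    by (simp add: w_def)
  define k where "k = 1 / (eta2 - eta1)"
  have phi_mode: "phi_mode eta1 eta2 phi0 j u = (\<lambda>M. k * (heis eta2 j (phi0 u) M - phi0 (heis eta1 j u) M))"
    for j u
    by (simp add: phi_mode_def vscale_def vsub_def k_def fun_eq_iff)
  show ?thesis
    using v
    by (simp add: vcomm_def vsub_def phi_mode vir_scale vir_diff intertwines heis_fock_space target source
        algebra_simps)
qed

lemma vcomm_phi_mode:
  "v \<in> fock_space \<Longrightarrow> vcomm eta1 eta2 lam m (phi_mode eta1 eta2 phi0 n) v
     = vscale (- of_int n) (phi_mode eta1 eta2 phi0 (m + n) v)"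
  by (simp add: fun_eq_iff vcomm_phi_mode_apply vscale_def)

lemma vcomm_phi_mode_antisym:
  "v \<in> fock_space \<Longrightarrow>
    vsub (vcomm eta1 eta2 lam m (phi_mode eta1 eta2 phi0 n) v) (vcomm eta1 eta2 lam n (phi_mode eta1 eta2 phi0 m) v)
      = vscale (of_int (m - n)) (phi_mode eta1 eta2 phi0 (m + n) v)"
  by (simp add: fun_eq_iff vcomm_phi_mode_apply vscale_def vsub_def add.commute algebra_simps)

lemma phi_mode_fock_space: "v \<in> fock_space \<Longrightarrow> phi_mode eta1 eta2 phi0 n v \<in> fock_space"
  unfolding phi_mode_def by (intro vscale_fock_space vsub_fock_space heis_fock_space closed)

lemma phi_mode_vadd:
  assumes "u \<in> fock_space" "v \<in> fock_space"
  shows "phi_mode eta1 eta2 phi0 n (vadd u v) = vadd (phi_mode eta1 eta2 phi0 n u) (phi_mode eta1 eta2 phi0 n v)"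
proof -
  have "heis eta1 n (vadd u v) = vadd (heis eta1 n u) (heis eta1 n v)"
    by (simp add: vadd_def heis_add)
  then show ?thesis
    using assms
    by (simp add: phi_mode_def additive heis_fock_space)
      (simp add: vadd_def vsub_def vscale_def heis_add fun_eq_iff algebra_simps)
qed

lemma phi_mode_vscale:
  assumes "v \<in> fock_space"
  shows "phi_mode eta1 eta2 phi0 n (vscale c v) = vscale c (phi_mode eta1 eta2 phi0 n v)"
proof -
  have "heis eta1 n (vscale c v) = vscale c (heis eta1 n v)"
    by (simp add: vscale_def heis_scale)
  then show ?thesis
    using assms
    by (simp add: phi_mode_def homog heis_fock_space)
      (simp add: vsub_def vscale_def heis_scale fun_eq_iff algebra_simps)
qed

lemma ext_op_fock_space:
  "x \<in> fock_space \<times> fock_space \<Longrightarrow> ext_op eta1 eta2 lam phi0 n x \<in> fock_space \<times> fock_space"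
  by (auto simp: ext_op_def intro!: vadd_fock_space vir_fock_space phi_mode_fock_space)

lemma ext_op_padd:
  "x \<in> fock_space \<times> fock_space \<Longrightarrow> y \<in> fock_space \<times> fock_space \<Longrightarrow>
    ext_op eta1 eta2 lam phi0 n (padd x y) = padd (ext_op eta1 eta2 lam phi0 n x) (ext_op eta1 eta2 lam phi0 n y)"
  by (auto simp: ext_op_def padd_def phi_mode_vadd)
    (simp_all add: vadd_def vir_add fun_eq_iff algebra_simps)

lemma ext_op_pscale:
  "x \<in> fock_space \<times> fock_space \<Longrightarrow>
    ext_op eta1 eta2 lam phi0 n (pscale c x) = pscale c (ext_op eta1 eta2 lam phi0 n x)"
  by (auto simp: ext_op_def pscale_def phi_mode_vscale)
    (simp_all add: vadd_def vscale_def vir_scale fun_eq_iff algebra_simps)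

text \<open>The off-diagonal entry of \<open>[\<rho>(L_m), \<rho>(L_n)]\<close> is \<open>[L_m, \<phi>_n] - [L_n, \<phi>_m] = (m - n) \<phi>_{m+n}\<close>.\<close>

lemma ext_op_commute:
  assumes "x \<in> fock_space \<times> fock_space"
  shows "psub (ext_op eta1 eta2 lam phi0 m (ext_op eta1 eta2 lam phi0 n x))
              (ext_op eta1 eta2 lam phi0 n (ext_op eta1 eta2 lam phi0 m x))
           = padd (pscale (of_int (m - n)) (ext_op eta1 eta2 lam phi0 (m + n) x))
                  (pscale (virasoro_central_term (1 - 12 * lam ^ 2) m n) x)"
proof -
  obtain u w where x: "x = (u, w)" and u: "u \<in> fock_space" and w: "w \<in> fock_space"
    using assms by auto
  let ?c = "virasoro_central_term (1 - 12 * lam ^ 2) m n" and ?phi = "phi_mode eta1 eta2 phi0"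
  have "vir eta2 lam m (vir eta2 lam n u) M
      = vir eta2 lam n (vir eta2 lam m u) M + of_int (m - n) * vir eta2 lam (m + n) u M + ?c * u M"
    and "vir eta1 lam m (vir eta1 lam n w) M
      = vir eta1 lam n (vir eta1 lam m w) M + of_int (m - n) * vir eta1 lam (m + n) w M + ?c * w M"
    and "vir eta2 lam m (?phi n w) M = ?phi n (vir eta1 lam m w) M - of_int n * ?phi (m + n) w M"
    and "vir eta2 lam n (?phi m w) M = ?phi m (vir eta1 lam n w) M - of_int m * ?phi (m + n) w M"
    for M
    using vir_commute[OF u, of eta2 lam m n M] vir_commute[OF w, of eta1 lam m n M]
      vcomm_phi_mode_apply[OF w, of m n M] vcomm_phi_mode_apply[OF w, of n m M]
    by (simp_all add: vcomm_def vsub_def add.commute algebra_simps)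
  then show ?thesis
    by (simp add: x ext_op_def psub_def padd_def pscale_def vadd_def vsub_def vscale_def vir_add fun_eq_iff)
      (simp add: algebra_simps)
qed

end

theorem mainTheorem3:
  fixes eta1 eta2 lam :: complex and phi0 :: "fvec \<Rightarrow> fvec"
  assumes neq: "eta1 \<noteq> eta2"
    and closed: "\<forall>v\<in>fock_space. phi0 v \<in> fock_space"
    and additive: "\<forall>u\<in>fock_space. \<forall>v\<in>fock_space. phi0 (vadd u v) = vadd (phi0 u) (phi0 v)"
    and homog: "\<forall>c. \<forall>v\<in>fock_space. phi0 (vscale c v) = vscale c (phi0 v)"
    and intertwines: "\<forall>m. \<forall>v\<in>fock_space. vir eta2 lam m (phi0 v) = phi0 (vir eta1 lam m v)"
  shows
    "(\<forall>v\<in>fock_space. phi_mode eta1 eta2 phi0 0 v = phi0 v)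
   \<and> (\<forall>m n. \<forall>v\<in>fock_space.
        vcomm eta1 eta2 lam m (phi_mode eta1 eta2 phi0 n) v
          = vscale (- of_int n) (phi_mode eta1 eta2 phi0 (m + n) v))
   \<and> (\<forall>m n. \<forall>v\<in>fock_space.
        vsub (vcomm eta1 eta2 lam m (phi_mode eta1 eta2 phi0 n) v)
             (vcomm eta1 eta2 lam n (phi_mode eta1 eta2 phi0 m) v)
          = vscale (of_int (m - n)) (phi_mode eta1 eta2 phi0 (m + n) v))
   \<and> (\<forall>n. \<forall>x\<in>fock_space \<times> fock_space.
        ext_op eta1 eta2 lam phi0 n x \<in> fock_space \<times> fock_space)
   \<and> (\<forall>n. \<forall>x\<in>fock_space \<times> fock_space. \<forall>y\<in>fock_space \<times> fock_space. \<forall>c.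
        ext_op eta1 eta2 lam phi0 n (padd x y)
          = padd (ext_op eta1 eta2 lam phi0 n x) (ext_op eta1 eta2 lam phi0 n y)
      \<and> ext_op eta1 eta2 lam phi0 n (pscale c x) = pscale c (ext_op eta1 eta2 lam phi0 n x))
   \<and> (\<forall>m n. \<forall>x\<in>fock_space \<times> fock_space.
        psub (ext_op eta1 eta2 lam phi0 m (ext_op eta1 eta2 lam phi0 n x))
             (ext_op eta1 eta2 lam phi0 n (ext_op eta1 eta2 lam phi0 m x))
          = padd (pscale (of_int (m - n)) (ext_op eta1 eta2 lam phi0 (m + n) x))
                 (pscale (if m + n = 0
                          then (1 - 12 * lam ^ 2) / 12 * (of_int m ^ 3 - of_int m) else 0) x))"
proof -
  interpret fock_intertwiner eta1 eta2 lam phi0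
    using assms by unfold_locales blast+
  show ?thesis
    by (intro conjI allI ballI phi_mode_zero vcomm_phi_mode vcomm_phi_mode_antisym ext_op_fock_space
        ext_op_padd ext_op_pscale ext_op_commute[unfolded virasoro_central_term_def])
qed

end
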